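(* A dual-convex $m\times n$ net in $I^3$ is flexible in $I^3$ if and only if it has a nontrivial isotropic isometric deformation consisting of $m\times n$ nets that are v-parallel to it.
   Context: $I^3$ is $\mathbb{R}^3$ with coordinates $(x,y,z)$; isotropic = parallel to the $z$-axis; top view $\overline P$ of $P=(x,y,z)$ is $(x,y)$. Isotropic congruences: maps $\mathbf{x}\mapsto A\mathbf{x}+\mathbf{b}$, $A=\begin{pmatrix}\cos\phi&-\sin\phi&0\\ \sin\phi&\cos\phi&0\\ c_1&c_2&1\end{pmatrix}$. Metric duality: point $P=(P^1,P^2,P^3)\leftrightarrow$ plane $P^*\colon z=P^1x+P^2y-P^3$. An $m\times n$ net: points $F_{ij}$, $0\le i\le m,0\le j\le n$, with $F_{ij},F_{i+1,j},F_{i+1,j+1},F_{i,j+1}$ consecutive vertices of a convex planar quadrilateral (face $p_{ij}$) for all $0\le i<m,0\le j<n$. Boundary vertices: $i\in\{0,m\}$ or $j\in\{0,n\}$; consecutive faces around non-boundary $F_{ij}$: $p_{i-1,j-1},p_{i,j-1},p_{ij},p_{i-1,j}$. Convex 4-hedral angle with vertex $O$: union of rays from $O$ meeting a convex quadrilateral in a plane not through $O$; flat angles: rays through one side; admissible: isotropic line through $O$ meets its interior. Dual-convex: $m,n\ge2$ and at each non-boundary vertex the four consecutive face planes are planes of four consecutive flat angles of an admissible convex 4-hedral angle. Two nets are v-parallel if vertices with equal indices have equal top views. Curvature at non-boundary vertex with consecutive faces $p_1..p_4$: $\Omega=\frac12\sum_{k=1}^4\det(\overline{p_k^*},\overline{p_{k+1}^*})$,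 $p_5=p_1$. An isotropic isometric deformation of a dual-convex net $F_{ij}$ is a continuous family of $m\times n$ nets $F_{ij}(t)$, $t\in[0,1]$, $F_{ij}(0)=F_{ij}$, with corresponding faces isotropically congruent and equal curvatures at corresponding non-boundary vertices; trivial if for each $t$ there is an isotropic congruence $C_t$ with $F_{ij}(t)=C_t(F_{ij})$ for all $i,j$. Flexible in $I^3$: has a nontrivial isotropic isometric deformation. *)

theory Defs
  imports "HOL-Analysis.Analysis"
begin

text \<open>Points of I^3 are vectors in real^3; coordinates x = v$1, y = v$2, z = v$3.
  The isotropic direction is the z-axis (axis 3 1).\<close>

type_synonym pt = "real^3"
type_synonym net_fun = "nat \<Rightarrow> nat \<Rightarrow> pt"

definition iso_matrix :: "real \<Rightarrow> real \<Rightarrow> real \<Rightarrow> real^3^3" where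
  "iso_matrix \<phi> c1 c2 =
     vector [vector [cos \<phi>, - sin \<phi>, 0], vector [sin \<phi>, cos \<phi>, 0], vector [c1, c2, 1]]"

definition is_iso_congruence :: "(pt \<Rightarrow> pt) \<Rightarrow> bool" where
  "is_iso_congruence C \<longleftrightarrow>
     (\<exists>\<phi> c1 c2 (b::pt). C = (\<lambda>x. iso_matrix \<phi> c1 c2 *v x + b))"

text \<open>Convex (non-degenerate) planar quadrilateral with consecutive vertices A, B, C, D:
  no three vertices collinear and the diagonals AC and BD meet (this forces planarity
  and convexity with the given cyclic order).\<close>

definition convex_quad :: "pt \<Rightarrow> pt \<Rightarrow> pt \<Rightarrow> pt \<Rightarrow> bool" where
  "convex_quad A B C D \<longleftrightarrow>
     \<not> collinear {A, B, C} \<and> \<not> collinear {B, C, D} \<and>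
     \<not> collinear {C, D, A} \<and> \<not> collinear {D, A, B} \<and>
     closed_segment A C \<inter> closed_segment B D \<noteq> {}"

definition is_net :: "nat \<Rightarrow> nat \<Rightarrow> net_fun \<Rightarrow> bool" where
  "is_net m n F \<longleftrightarrow>
     (\<forall>i<m. \<forall>j<n. convex_quad (F i j) (F (Suc i) j) (F (Suc i) (Suc j)) (F i (Suc j)))"

definition face_plane :: "net_fun \<Rightarrow> nat \<Rightarrow> nat \<Rightarrow> pt set" where
  "face_plane F i j = affine hull {F i j, F (Suc i) j, F (Suc i) (Suc j), F i (Suc j)}"

definition non_boundary :: "nat \<Rightarrow> nat \<Rightarrow> nat \<Rightarrow> nat \<Rightarrow> bool" where
  "non_boundary m n i j \<longleftrightarrow> 0 < i \<and> i < m \<and> 0 < j \<and> j < n"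

definition hedral_angle :: "pt \<Rightarrow> pt \<Rightarrow> pt \<Rightarrow> pt \<Rightarrow> pt \<Rightarrow> pt set" where
  "hedral_angle V Q1 Q2 Q3 Q4 =
     {V + t *\<^sub>R (q - V) | t q. 0 \<le> t \<and> q \<in> convex hull {Q1, Q2, Q3, Q4}}"

definition is_convex_hedral_angle :: "pt \<Rightarrow> pt \<Rightarrow> pt \<Rightarrow> pt \<Rightarrow> pt \<Rightarrow> bool" where
  "is_convex_hedral_angle V Q1 Q2 Q3 Q4 \<longleftrightarrow>
     convex_quad Q1 Q2 Q3 Q4 \<and> V \<notin> affine hull {Q1, Q2, Q3, Q4}"

definition admissible_angle :: "pt \<Rightarrow> pt \<Rightarrow> pt \<Rightarrow> pt \<Rightarrow> pt \<Rightarrow> bool" where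
  "admissible_angle V Q1 Q2 Q3 Q4 \<longleftrightarrow>
     is_convex_hedral_angle V Q1 Q2 Q3 Q4 \<and>
     (\<exists>s::real. V + s *\<^sub>R axis 3 1 \<in> interior (hedral_angle V Q1 Q2 Q3 Q4))"

text \<open>The plane of the flat angle through the side Qk Qk+1 is the affine hull of V, Qk, Qk+1.
  Consecutive faces around a non-boundary vertex F_ij: p_{i-1,j-1}, p_{i,j-1}, p_ij, p_{i-1,j}.\<close>
definition dual_convex :: "nat \<Rightarrow> nat \<Rightarrow> net_fun \<Rightarrow> bool" where
  "dual_convex m n F \<longleftrightarrow>
     2 \<le> m \<and> 2 \<le> n \<and> is_net m n F \<and>
     (\<forall>i j. non_boundary m n i j \<longrightarrow>
        (\<exists>Q1 Q2 Q3 Q4. admissible_angle (F i j) Q1 Q2 Q3 Q4 \<and>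
           face_plane F (i - 1) (j - 1) = affine hull {F i j, Q1, Q2} \<and>
           face_plane F i (j - 1) = affine hull {F i j, Q2, Q3} \<and>
           face_plane F i j = affine hull {F i j, Q3, Q4} \<and>
           face_plane F (i - 1) j = affine hull {F i j, Q4, Q1}))"

text \<open>For a non-isotropic plane z = a x + b y + c its metric dual is the point (a, b, -c),
  whose top view is (a, b). For face p_ij, with normal N = (B - A) x (C - A) computed from
  three of its (non-collinear) vertices, this top view is (-N1/N3, -N2/N3).\<close>
definition face_dual_top :: "net_fun \<Rightarrow> nat \<Rightarrow> nat \<Rightarrow> real \<times> real" where
  "face_dual_top F i j =
     (let N = cross3 (F (Suc i) j - F i j) (F i (Suc j) - F i j)
      in (- N$1 / N$3, - N$2 / N$3))"

definition det2 :: "real \<times> real \<Rightarrow> real \<times> real \<Rightarrow> real" where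
  "det2 u v = fst u * snd v - snd u * fst v"

definition curvature :: "net_fun \<Rightarrow> nat \<Rightarrow> nat \<Rightarrow> real" where
  "curvature F i j =
     (let p1 = face_dual_top F (i - 1) (j - 1); p2 = face_dual_top F i (j - 1);
          p3 = face_dual_top F i j; p4 = face_dual_top F (i - 1) j
      in (det2 p1 p2 + det2 p2 p3 + det2 p3 p4 + det2 p4 p1) / 2)"

definition iso_isometric_deformation ::
  "nat \<Rightarrow> nat \<Rightarrow> net_fun \<Rightarrow> (real \<Rightarrow> net_fun) \<Rightarrow> bool" where
  "iso_isometric_deformation m n F D \<longleftrightarrow>
     (\<forall>t\<in>{0..1}. is_net m n (D t)) \<and>
     (\<forall>i\<le>m. \<forall>j\<le>n. D 0 i j = F i j) \<and>
     (\<forall>i\<le>m. \<forall>j\<le>n. continuous_on {0..1} (\<lambda>t. D t i j)) \<and>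
     (\<forall>t\<in>{0..1}. \<forall>i<m. \<forall>j<n. \<exists>C. is_iso_congruence C \<and>
         C (F i j) = D t i j \<and> C (F (Suc i) j) = D t (Suc i) j \<and>
         C (F (Suc i) (Suc j)) = D t (Suc i) (Suc j) \<and> C (F i (Suc j)) = D t i (Suc j)) \<and>
     (\<forall>t\<in>{0..1}. \<forall>i j. non_boundary m n i j \<longrightarrow> curvature (D t) i j = curvature F i j)"

definition trivial_deformation :: "nat \<Rightarrow> nat \<Rightarrow> net_fun \<Rightarrow> (real \<Rightarrow> net_fun) \<Rightarrow> bool" where
  "trivial_deformation m n F D \<longleftrightarrow>
     (\<forall>t\<in>{0..1}. \<exists>C. is_iso_congruence C \<and> (\<forall>i\<le>m. \<forall>j\<le>n. D t i j = C (F i j)))"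

definition flexible_I3 :: "nat \<Rightarrow> nat \<Rightarrow> net_fun \<Rightarrow> bool" where
  "flexible_I3 m n F \<longleftrightarrow>
     (\<exists>D. iso_isometric_deformation m n F D \<and> \<not> trivial_deformation m n F D)"

definition v_parallel :: "nat \<Rightarrow> nat \<Rightarrow> net_fun \<Rightarrow> net_fun \<Rightarrow> bool" where
  "v_parallel m n G F \<longleftrightarrow> (\<forall>i\<le>m. \<forall>j\<le>n. G i j $ 1 = F i j $ 1 \<and> G i j $ 2 = F i j $ 2)"

end

theory Submission
  imports Defs
begin

text \<open>An isotropic congruence acts on top views as a Euclidean motion of the plane. Admissibility
  of the vertex angles makes every face plane of a dual-convex net non-vertical, so distinct
  vertices of a face have distinct top views. Adjacent faces share an edge, hence the top-view
  motions of all face congruences of a deformed net coincide. Undoing this common motion, which is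
  itself an isotropic congruence depending continuously on the parameter, turns the deformation
  into a v-parallel one; it stays isometric, since rotating the metric duals of the faces
  preserves the curvature, and it stays nontrivial.\<close>

section \<open>Top views and planar motions\<close>

text \<open>Top views are complex numbers, on which isotropic congruences act as \<open>z \<mapsto> a * z + b\<close>
  with \<open>cmod a = 1\<close>.\<close>

definition top_view :: "pt \<Rightarrow> complex" where
  "top_view x = Complex (x$1) (x$2)"

definition lift_point :: "complex \<Rightarrow> real \<Rightarrow> pt" where
  "lift_point w h = vector [Re w, Im w, h]"

lemma top_view_lift_point [simp]: "top_view (lift_point w h) = w"
  by (simp add: top_view_def lift_point_def complex_eq_iff)

lemma lift_point_nth_3 [simp]: "lift_point w h $ 3 = h"
  by (simp add: lift_point_def)

lemma pt_eq_iff_top_view: "x = y \<longleftrightarrow> top_view x = top_view y \<and> x$3 = y$3"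
  by (auto simp: top_view_def complex_eq_iff vec_eq_iff forall_3)

lemma top_view_add [simp]: "top_view (x + y) = top_view x + top_view y"
  and top_view_diff [simp]: "top_view (x - y) = top_view x - top_view y"
  by (simp_all add: top_view_def complex_eq_iff)

lemma top_view_alt: "top_view x = complex_of_real (x$1) + \<i> * complex_of_real (x$2)"
  by (simp add: top_view_def complex_eq_iff)

lemma lift_point_alt: "lift_point w h = Re w *\<^sub>R axis 1 1 + Im w *\<^sub>R axis 2 1 + h *\<^sub>R axis 3 1"
  by (simp add: lift_point_def vec_eq_iff forall_3 axis_def)

lemma continuous_on_top_view [continuous_intros]:
  "continuous_on S f \<Longrightarrow> continuous_on S (\<lambda>t. top_view (f t))"
  unfolding top_view_alt by (intro continuous_intros)

lemma continuous_on_lift_point [continuous_intros]: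
  "continuous_on S w \<Longrightarrow> continuous_on S h \<Longrightarrow> continuous_on S (\<lambda>t. lift_point (w t) (h t))"
  unfolding lift_point_alt by (intro continuous_intros)

definition planar_motion :: "complex \<Rightarrow> complex \<Rightarrow> pt \<Rightarrow> pt" where
  "planar_motion a b x = lift_point (a * top_view x + b) (x$3)"

lemma top_view_planar_motion [simp]: "top_view (planar_motion a b x) = a * top_view x + b"
  and planar_motion_nth_3 [simp]: "planar_motion a b x $ 3 = x $ 3"
  by (simp_all add: planar_motion_def)

lemma planar_motion_id [simp]: "planar_motion 1 0 x = x"
  by (simp add: pt_eq_iff_top_view)

lemma planar_motion_inverse:
  assumes "cmod a = 1"
  shows "planar_motion (cnj a) (- cnj a * b) (planar_motion a b x) = x"
proof -
  have "cnj a * a = 1"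
    using assms by (simp add: complex_norm_square[symmetric] mult.commute)
  then show ?thesis
    by (simp add: pt_eq_iff_top_view algebra_simps)
qed

lemma planar_motion_diff:
  "planar_motion a b x - planar_motion a b y = lift_point (a * top_view (x - y)) ((x - y)$3)"
  by (simp add: pt_eq_iff_top_view algebra_simps)

lemma continuous_on_planar_motion [continuous_intros]:
  "continuous_on S a \<Longrightarrow> continuous_on S b \<Longrightarrow> continuous_on S f \<Longrightarrow>
   continuous_on S (\<lambda>t. planar_motion (a t) (b t) (f t))"
  unfolding planar_motion_def by (intro continuous_intros)

lemma affine_map_eq_two_points:
  fixes z z' a a' b b' :: complex
  assumes "z \<noteq> z'" "a * z + b = a' * z + b'" "a * z' + b = a' * z' + b'"
  shows "a = a' \<and> b = b'"
proof -
  have "(a * z + b) - (a * z' + b) = (a' * z + b') - (a' * z' + b')"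
    using assms(2,3) by simp
  then have "(a - a') * (z - z') = 0"
    by (simp add: algebra_simps)
  then have "a = a'"
    using assms(1) by simp
  then show ?thesis
    using assms(2) by simp
qed

lemma v_parallel_iff_top_view:
  "v_parallel m n G F \<longleftrightarrow> (\<forall>i\<le>m. \<forall>j\<le>n. top_view (G i j) = top_view (F i j))"
  by (simp add: v_parallel_def top_view_def complex_eq_iff)

section \<open>Isotropic congruences\<close>

lemma top_view_iso_matrix: "top_view (iso_matrix \<phi> c1 c2 *v x) = cis \<phi> * top_view x"
  and iso_matrix_nth_3: "(iso_matrix \<phi> c1 c2 *v x) $ 3 = c1 * x$1 + c2 * x$2 + x$3"
  by (simp_all add: iso_matrix_def matrix_vector_mult_def sum_3 top_view_def complex_eq_iff cis.ctr)

lemma iso_matrix_mult: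
  "iso_matrix \<phi> c1 c2 ** iso_matrix \<psi> d1 d2 =
     iso_matrix (\<phi> + \<psi>) (c1 * cos \<psi> + c2 * sin \<psi> + d1) (c2 * cos \<psi> - c1 * sin \<psi> + d2)"
  by (simp add: iso_matrix_def matrix_matrix_mult_def vec_eq_iff forall_3 sum_3 cos_add sin_add algebra_simps)

lemma det_iso_matrix: "det (iso_matrix \<phi> c1 c2) = 1"
  by (simp add: iso_matrix_def det_3 flip: power2_eq_square)

lemma is_iso_congruence_comp:
  assumes "is_iso_congruence C" "is_iso_congruence C'"
  shows "is_iso_congruence (\<lambda>x. C (C' x))"
proof -
  obtain \<phi> c1 c2 b where C: "C = (\<lambda>x. iso_matrix \<phi> c1 c2 *v x + b)"
    using assms(1) unfolding is_iso_congruence_def by blast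
  obtain \<psi> d1 d2 b' where C': "C' = (\<lambda>x. iso_matrix \<psi> d1 d2 *v x + b')"
    using assms(2) unfolding is_iso_congruence_def by blast
  show ?thesis
    unfolding is_iso_congruence_def C C'
    by (auto simp: matrix_vector_right_distrib matrix_vector_mul_assoc iso_matrix_mult add.assoc)
qed

lemma iso_congruence_top_view:
  assumes "is_iso_congruence C"
  obtains a b where "cmod a = 1" "\<And>x. top_view (C x) = a * top_view x + b"
proof -
  obtain \<phi> c1 c2 b where "C = (\<lambda>x. iso_matrix \<phi> c1 c2 *v x + b)"
    using assms unfolding is_iso_congruence_def by blast
  then show thesis
    using that[of "cis \<phi>" "top_view b"] by (simp add: top_view_iso_matrix)
qed

lemma is_iso_congruence_planar_motion:
  assumes "cmod a = 1"
  shows "is_iso_congruence (planar_motion a b)"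
proof -
  have "a \<noteq> 0"
    using assms by auto
  then have "cis (Arg a) = a"
    using assms by (simp add: cis_Arg sgn_div_norm)
  then have "planar_motion a b = (\<lambda>x. iso_matrix (Arg a) 0 0 *v x + lift_point b 0)"
    by (auto simp: fun_eq_iff pt_eq_iff_top_view top_view_iso_matrix iso_matrix_nth_3)
  then show ?thesis
    unfolding is_iso_congruence_def by blast
qed

lemma convex_quad_affine_image:
  assumes "linear f" "inj f" "convex_quad A B C D"
  shows "convex_quad (f A + b) (f B + b) (f C + b) (f D + b)"
proof -
  let ?g = "\<lambda>x. f x + b"
  have collinear_image: "collinear (?g ` S) \<longleftrightarrow> collinear S" for S
  proof -
    have "?g ` S = (+) b ` (f ` S)" by (auto simp: add.commute)
    then show ?thesis
      using assms(1,2) by (simp add: collinear_aff_dim aff_dim_translation_eq)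
  qed
  have segment_image: "closed_segment (?g x) (?g y) = ?g ` closed_segment x y" for x y
    using closed_segment_translation[of b "f x" "f y"] closed_segment_linear_image[OF assms(1), of x y]
    by (simp add: add.commute image_image)
  show ?thesis
    using assms(3) collinear_image[of "{_, _, _}"]
    unfolding convex_quad_def segment_image by auto
qed

lemma convex_quad_iso_congruence:
  assumes "is_iso_congruence K" "convex_quad A B C D"
  shows "convex_quad (K A) (K B) (K C) (K D)"
proof -
  obtain \<phi> c1 c2 b where K: "K = (\<lambda>x. iso_matrix \<phi> c1 c2 *v x + b)"
    using assms(1) unfolding is_iso_congruence_def by blast
  have "invertible (iso_matrix \<phi> c1 c2)"
    by (simp add: invertible_det_nz det_iso_matrix)
  then show ?thesis
    unfolding K by (intro convex_quad_affine_image assms(2) matrix_vector_mul_linear inj_matrix_vector_mult)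
qed

section \<open>Curvature under planar motions\<close>

lemma unit_complex_Re_Im_sq: "cmod a = 1 \<Longrightarrow> (Re a)\<^sup>2 + (Im a)\<^sup>2 = 1"
  using cmod_power2[of a] by simp

lemma cross3_lift_point_mult:
  assumes "cmod a = 1"
  shows "cross3 (lift_point (a * top_view u) (u$3)) (lift_point (a * top_view v) (v$3)) =
         lift_point (a * top_view (cross3 u v)) (cross3 u v $ 3)"
proof -
  let ?u = "lift_point (a * top_view u) (u$3)" and ?v = "lift_point (a * top_view v) (v$3)"
  have "cross3 ?u ?v $ 3 = ((Re a)\<^sup>2 + (Im a)\<^sup>2) * cross3 u v $ 3"
    by (simp add: cross_components lift_point_def top_view_def power2_eq_square algebra_simps)
  then have "cross3 ?u ?v $ 3 = cross3 u v $ 3"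
    by (simp add: unit_complex_Re_Im_sq[OF assms])
  moreover have "top_view (cross3 ?u ?v) = a * top_view (cross3 u v)"
    by (simp add: cross_components lift_point_def top_view_def complex_eq_iff algebra_simps)
  ultimately show ?thesis
    by (simp add: pt_eq_iff_top_view)
qed

definition rotate_pair :: "complex \<Rightarrow> real \<times> real \<Rightarrow> real \<times> real" where
  "rotate_pair a p = (Re a * fst p - Im a * snd p, Im a * fst p + Re a * snd p)"

lemma det2_rotate_pair:
  assumes "cmod a = 1"
  shows "det2 (rotate_pair a p) (rotate_pair a q) = det2 p q"
proof -
  have "det2 (rotate_pair a p) (rotate_pair a q) = ((Re a)\<^sup>2 + (Im a)\<^sup>2) * det2 p q"
    by (simp add: det2_def rotate_pair_def power2_eq_square algebra_simps)
  then show ?thesis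
    using unit_complex_Re_Im_sq[OF assms] by simp
qed

lemma face_dual_top_planar_motion:
  assumes "cmod a = 1"
  shows "face_dual_top (\<lambda>i j. planar_motion a b (H i j)) i j = rotate_pair a (face_dual_top H i j)"
proof -
  define N where "N = cross3 (H (Suc i) j - H i j) (H i (Suc j) - H i j)"
  have "cross3 (planar_motion a b (H (Suc i) j) - planar_motion a b (H i j))
               (planar_motion a b (H i (Suc j)) - planar_motion a b (H i j)) =
        lift_point (a * top_view N) (N$3)"
    unfolding planar_motion_diff N_def cross3_lift_point_mult[OF assms] ..
  then show ?thesis
    unfolding face_dual_top_def Let_def N_def[symmetric]
    by (simp add: rotate_pair_def lift_point_def top_view_def diff_divide_distrib add_divide_distrib)
qed

lemma curvature_planar_motion:
  assumes "cmod a = 1"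
  shows "curvature (\<lambda>i j. planar_motion a b (H i j)) i j = curvature H i j"
  unfolding curvature_def Let_def face_dual_top_planar_motion[OF assms] det2_rotate_pair[OF assms] ..

section \<open>Non-vertical face planes\<close>

lemma convex_quad_distinct:
  assumes "convex_quad A B C D"
  shows "distinct [A, B, C, D]"
  using assms unfolding convex_quad_def by (auto simp: insert_commute)

lemma convex_quad_side_halfspace:
  assumes "convex_quad Q1 Q2 Q3 Q4" "N \<bullet> Q1 = d" "N \<bullet> Q2 = d"
  shows "0 \<le> (N \<bullet> Q3 - d) * (N \<bullet> Q4 - d)"
proof -
  obtain X where "X \<in> closed_segment Q1 Q3" "X \<in> closed_segment Q2 Q4"
    using assms(1) unfolding convex_quad_def by blast
  then obtain s u where su: "0 \<le> s" "0 \<le> u"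
    and X: "X = (1 - s) *\<^sub>R Q1 + s *\<^sub>R Q3" "X = (1 - u) *\<^sub>R Q2 + u *\<^sub>R Q4"
    unfolding closed_segment_def by blast
  define x y where "x = N \<bullet> Q3 - d" and "y = N \<bullet> Q4 - d"
  have "N \<bullet> ((1 - s) *\<^sub>R Q1 + s *\<^sub>R Q3) = N \<bullet> ((1 - u) *\<^sub>R Q2 + u *\<^sub>R Q4)"
    using X by simp
  then have eq: "s * x = u * y"
    using assms(2,3) unfolding x_def y_def by (simp add: inner_add_right algebra_simps)
  have "Q1 \<noteq> Q2"
    using convex_quad_distinct[OF assms(1)] by simp
  then have "0 < s \<or> 0 < u"
    using X su by (cases "s = 0"; cases "u = 0") auto
  then have "0 \<le> x * y"
  proof
    assume "0 < s"
    then have "x * y = u / s * y\<^sup>2"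
      using eq by (simp add: field_simps power2_eq_square)
    then show ?thesis
      using su by simp
  next
    assume "0 < u"
    then have "x * y = s / u * x\<^sup>2"
      using eq by (simp add: field_simps power2_eq_square)
    then show ?thesis
      using su by simp
  qed
  then show ?thesis
    unfolding x_def y_def .
qed

lemma hedral_angle_subset_halfspace:
  assumes "\<forall>Q\<in>{Q1, Q2, Q3, Q4}. N \<bullet> V \<le> N \<bullet> Q"
  shows "hedral_angle V Q1 Q2 Q3 Q4 \<subseteq> {x. N \<bullet> V \<le> N \<bullet> x}"
proof
  fix y
  assume "y \<in> hedral_angle V Q1 Q2 Q3 Q4"
  then obtain t q where y: "y = V + t *\<^sub>R (q - V)" "0 \<le> t" "q \<in> convex hull {Q1, Q2, Q3, Q4}"
    unfolding hedral_angle_def by blast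
  have "convex hull {Q1, Q2, Q3, Q4} \<subseteq> {x. N \<bullet> V \<le> N \<bullet> x}"
    using assms by (intro hull_minimal convex_halfspace_ge) auto
  then have "N \<bullet> V \<le> N \<bullet> q"
    using y(3) by blast
  then show "y \<in> {x. N \<bullet> V \<le> N \<bullet> x}"
    using y(1,2) by (simp add: inner_add_right inner_diff_right)
qed

lemma affine_hull_3_subset_hyperplane:
  "affine hull {V, Q1, Q2} \<subseteq> {x. cross3 (Q1 - V) (Q2 - V) \<bullet> x = cross3 (Q1 - V) (Q2 - V) \<bullet> V}"
proof (intro hull_minimal affine_hyperplane)
  have "cross3 (Q1 - V) (Q2 - V) \<bullet> (Q1 - V) = 0" "cross3 (Q1 - V) (Q2 - V) \<bullet> (Q2 - V) = 0"
    by (simp_all add: dot_cross_self inner_commute[of _ "Q1 - V"])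
  then show "{V, Q1, Q2} \<subseteq> {x. cross3 (Q1 - V) (Q2 - V) \<bullet> x = cross3 (Q1 - V) (Q2 - V) \<bullet> V}"
    by (simp add: inner_diff_right)
qed

lemma convex_hedral_angle_side_normal_nonzero:
  assumes "is_convex_hedral_angle V Q1 Q2 Q3 Q4"
  shows "cross3 (Q1 - V) (Q2 - V) \<noteq> 0"
proof
  assume "cross3 (Q1 - V) (Q2 - V) = 0"
  then have "collinear {Q1, V, Q2}"
    unfolding cross_eq_0 by (subst collinear_3) simp
  moreover have "Q1 \<noteq> Q2"
    using assms convex_quad_distinct[of Q1 Q2 Q3 Q4] unfolding is_convex_hedral_angle_def by simp
  ultimately have "V \<in> affine hull {Q1, Q2}"
    by (simp add: insert_commute collinear_3_affine_hull)
  moreover have "affine hull {Q1, Q2} \<subseteq> affine hull {Q1, Q2, Q3, Q4}"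
    by (rule hull_mono) auto
  ultimately show False
    using assms unfolding is_convex_hedral_angle_def by blast
qed

lemma convex_quad_halfspace_of_side:
  assumes "convex_quad Q1 Q2 Q3 Q4" "N \<bullet> Q1 = N \<bullet> V" "N \<bullet> Q2 = N \<bullet> V"
  obtains N' where "N' \<in> {N, - N}" "\<forall>Q\<in>{Q1, Q2, Q3, Q4}. N' \<bullet> V \<le> N' \<bullet> Q"
proof -
  have "0 \<le> (N \<bullet> Q3 - N \<bullet> V) * (N \<bullet> Q4 - N \<bullet> V)"
    by (rule convex_quad_side_halfspace[OF assms])
  then consider "N \<bullet> V \<le> N \<bullet> Q3" "N \<bullet> V \<le> N \<bullet> Q4" | "N \<bullet> Q3 \<le> N \<bullet> V" "N \<bullet> Q4 \<le> N \<bullet> V"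
    unfolding zero_le_mult_iff by linarith
  then show thesis
  proof cases
    case 1
    then show thesis
      using assms(2,3) by (intro that[of N]) auto
  next
    case 2
    then show thesis
      using assms(2,3) by (intro that[of "- N"]) auto
  qed
qed

text \<open>Were the plane through the side \<open>Q1 Q2\<close> vertical, the angle would lie in a closed
  half-space whose boundary contains the isotropic line through \<open>V\<close>.\<close>

lemma admissible_angle_nonvertical:
  assumes "admissible_angle V Q1 Q2 Q3 Q4"
  shows "cross3 (Q1 - V) (Q2 - V) $ 3 \<noteq> 0"
proof
  define N where "N = cross3 (Q1 - V) (Q2 - V)"
  assume N3: "N $ 3 = 0"
  have angle: "is_convex_hedral_angle V Q1 Q2 Q3 Q4"
    using assms unfolding admissible_angle_def by blast
  then have quad: "convex_quad Q1 Q2 Q3 Q4"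
    unfolding is_convex_hedral_angle_def by blast
  have "N \<bullet> Q1 = N \<bullet> V" "N \<bullet> Q2 = N \<bullet> V"
    using affine_hull_3_subset_hyperplane[of V Q1 Q2] hull_inc[of _ "{V, Q1, Q2}"]
    unfolding N_def by auto
  then obtain N' where N': "N' \<in> {N, - N}" "\<forall>Q\<in>{Q1, Q2, Q3, Q4}. N' \<bullet> V \<le> N' \<bullet> Q"
    by (rule convex_quad_halfspace_of_side[OF quad])
  then have "N' \<noteq> 0" "N' $ 3 = 0"
    using convex_hedral_angle_side_normal_nonzero[OF angle] N3 unfolding N_def by auto
  have "interior (hedral_angle V Q1 Q2 Q3 Q4) \<subseteq> {x. N' \<bullet> V < N' \<bullet> x}"
    using interior_mono[OF hedral_angle_subset_halfspace[OF N'(2)]] \<open>N' \<noteq> 0\<close> by simp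
  moreover obtain s where "V + s *\<^sub>R axis 3 1 \<in> interior (hedral_angle V Q1 Q2 Q3 Q4)"
    using assms unfolding admissible_angle_def by blast
  moreover have "N' \<bullet> (V + s *\<^sub>R axis 3 1) = N' \<bullet> V"
    using \<open>N' $ 3 = 0\<close> by (simp add: inner_add_right inner_axis)
  ultimately show False
    by auto
qed

lemma inj_on_top_view_hyperplane:
  assumes "N $ 3 \<noteq> 0"
  shows "inj_on top_view {x. N \<bullet> x = d}"
proof (rule inj_onI)
  fix x y
  assume "x \<in> {x. N \<bullet> x = d}" "y \<in> {x. N \<bullet> x = d}" "top_view x = top_view y"
  then have "N$1 * x$1 + N$2 * x$2 + N$3 * x$3 = N$1 * x$1 + N$2 * x$2 + N$3 * y$3"
    by (simp add: inner_vec_def sum_3 top_view_def complex_eq_iff)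
  then show "x = y"
    using assms \<open>top_view x = top_view y\<close> by (simp add: pt_eq_iff_top_view)
qed

lemma admissible_angle_inj_on_top_view:
  assumes "admissible_angle V Q1 Q2 Q3 Q4"
  shows "inj_on top_view (affine hull {V, Q1, Q2})"
  using inj_on_top_view_hyperplane[OF admissible_angle_nonvertical[OF assms]]
    affine_hull_3_subset_hyperplane by (rule inj_on_subset)

lemma admissible_angle_rotate:
  assumes "admissible_angle V Q1 Q2 Q3 Q4"
  shows "admissible_angle V Q2 Q3 Q4 Q1"
proof -
  have vertices: "{Q2, Q3, Q4, Q1} = {Q1, Q2, Q3, Q4}"
    by auto
  have "convex_quad Q2 Q3 Q4 Q1 = convex_quad Q1 Q2 Q3 Q4"
    unfolding convex_quad_def by (auto simp: insert_commute closed_segment_commute)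
  moreover have "hedral_angle V Q2 Q3 Q4 Q1 = hedral_angle V Q1 Q2 Q3 Q4"
    unfolding hedral_angle_def vertices ..
  ultimately show ?thesis
    using assms unfolding admissible_angle_def is_convex_hedral_angle_def vertices by simp
qed

lemma dual_convex_inj_on_top_view_face_plane:
  assumes "dual_convex m n F" "i < m" "j < n"
  shows "inj_on top_view (face_plane F i j)"
proof -
  have around_vertex:
    "inj_on top_view (face_plane F (k - 1) (l - 1)) \<and> inj_on top_view (face_plane F k (l - 1)) \<and>
     inj_on top_view (face_plane F k l) \<and> inj_on top_view (face_plane F (k - 1) l)"
    if vertex: "non_boundary m n k l" for k l
  proof -
    obtain Q1 Q2 Q3 Q4 where adm: "admissible_angle (F k l) Q1 Q2 Q3 Q4"
      and "face_plane F (k - 1) (l - 1) = affine hull {F k l, Q1, Q2}"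
        "face_plane F k (l - 1) = affine hull {F k l, Q2, Q3}"
        "face_plane F k l = affine hull {F k l, Q3, Q4}"
        "face_plane F (k - 1) l = affine hull {F k l, Q4, Q1}"
      using assms(1) vertex unfolding dual_convex_def by blast
    moreover note admissible_angle_rotate[OF adm]
    moreover note admissible_angle_rotate[OF this]
    moreover note admissible_angle_rotate[OF this]
    ultimately show ?thesis
      using admissible_angle_inj_on_top_view by metis
  qed
  have "non_boundary m n (max 1 i) (max 1 j)"
    using assms unfolding dual_convex_def non_boundary_def by auto
  moreover have "i = max 1 i - 1 \<or> i = max 1 i" "j = max 1 j - 1 \<or> j = max 1 j"
    by auto
  ultimately show ?thesis
    using around_vertex by metis
qed

definition face_corners :: "nat \<Rightarrow> nat \<Rightarrow> (nat \<times> nat) set" where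
  "face_corners i j = {(i, j), (Suc i, j), (Suc i, Suc j), (i, Suc j)}"

lemma dual_convex_inj_on_face_corners:
  assumes "dual_convex m n F" "i < m" "j < n"
  shows "inj_on (\<lambda>(k, l). top_view (F k l)) (face_corners i j)"
proof (rule inj_onI, clarify)
  fix k l k' l'
  assume corners: "(k, l) \<in> face_corners i j" "(k', l') \<in> face_corners i j"
    and "top_view (F k l) = top_view (F k' l')"
  moreover have "F k l \<in> face_plane F i j" "F k' l' \<in> face_plane F i j"
    using corners unfolding face_corners_def face_plane_def by (auto intro: hull_inc)
  ultimately have "F k l = F k' l'"
    using dual_convex_inj_on_top_view_face_plane[OF assms] by (auto dest: inj_onD)
  moreover have "distinct [F i j, F (Suc i) j, F (Suc i) (Suc j), F i (Suc j)]"
    using assms by (intro convex_quad_distinct) (auto simp: dual_convex_def is_net_def)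
  ultimately show "k = k' \<and> l = l'"
    using corners unfolding face_corners_def by auto
qed

lemma dual_convex_top_view_first_edge:
  assumes "dual_convex m n F"
  shows "top_view (F 0 0) \<noteq> top_view (F 1 0)"
proof -
  have "0 < m" "0 < n"
    using assms unfolding dual_convex_def by simp_all
  then show ?thesis
    using inj_onD[OF dual_convex_inj_on_face_corners[OF assms], of 0 0 "(0, 0)" "(1, 0)"]
    by (auto simp: face_corners_def)
qed

section \<open>The common top-view motion of facewise congruent nets\<close>

definition face_congruent :: "net_fun \<Rightarrow> net_fun \<Rightarrow> nat \<Rightarrow> nat \<Rightarrow> bool" where
  "face_congruent F G i j \<longleftrightarrow>
     (\<exists>C. is_iso_congruence C \<and>
         C (F i j) = G i j \<and> C (F (Suc i) j) = G (Suc i) j \<and>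
         C (F (Suc i) (Suc j)) = G (Suc i) (Suc j) \<and> C (F i (Suc j)) = G i (Suc j))"

definition top_motion_on :: "complex \<Rightarrow> complex \<Rightarrow> net_fun \<Rightarrow> net_fun \<Rightarrow> (nat \<times> nat) set \<Rightarrow> bool" where
  "top_motion_on a b F G S \<longleftrightarrow> (\<forall>(k, l)\<in>S. top_view (G k l) = a * top_view (F k l) + b)"

lemma top_motion_on_subset: "top_motion_on a b F G S \<Longrightarrow> T \<subseteq> S \<Longrightarrow> top_motion_on a b F G T"
  unfolding top_motion_on_def by blast

lemma face_grid_induct:
  assumes "i < m" "j < n" "P 0 0"
    and step_j: "\<And>i j. P i j \<Longrightarrow> i < m \<Longrightarrow> Suc j < n \<Longrightarrow> P i (Suc j)"
    and step_i: "\<And>i j. P i j \<Longrightarrow> Suc i < m \<Longrightarrow> j < n \<Longrightarrow> P (Suc i) j"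
  shows "P i j"
proof -
  have column: "P k 0" if "k < m" for k
    using that
  proof (induction k)
    case 0
    then show ?case using assms(3) by simp
  next
    case (Suc k)
    then show ?case using step_i[of k 0] assms(2) by simp
  qed
  have "P i l" if "l < n" for l
    using that
  proof (induction l)
    case 0
    then show ?case using column assms(1) by simp
  next
    case (Suc l)
    then show ?case using step_j[of i l] assms(1) by simp
  qed
  then show ?thesis
    using assms(2) .
qed

lemma face_congruent_top_motion:
  assumes "face_congruent F G i j" "inj_on (\<lambda>(k, l). top_view (F k l)) (face_corners i j)"
    and "p \<in> face_corners i j" "q \<in> face_corners i j" "p \<noteq> q" "top_motion_on a b F G {p, q}"
  shows "cmod a = 1 \<and> top_motion_on a b F G (face_corners i j)"
proof -
  obtain C where C: "is_iso_congruence C" "\<forall>(k, l)\<in>face_corners i j. C (F k l) = G k l"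
    using assms(1) unfolding face_congruent_def face_corners_def by auto
  obtain a' b' where a': "cmod a' = 1" "\<And>x. top_view (C x) = a' * top_view x + b'"
    using iso_congruence_top_view[OF C(1)] by blast
  have motion': "top_motion_on a' b' F G (face_corners i j)"
    using C(2) unfolding top_motion_on_def by (fastforce simp: a'(2)[symmetric])
  obtain k l k' l' where pq: "p = (k, l)" "q = (k', l')"
    by fastforce
  have "top_view (F k l) \<noteq> top_view (F k' l')"
    using inj_onD[OF assms(2), of p q] assms(3-5) pq by auto
  moreover have "a * top_view (F k l) + b = a' * top_view (F k l) + b'"
    "a * top_view (F k' l') + b = a' * top_view (F k' l') + b'"
    using assms(3,4,6) motion' pq unfolding top_motion_on_def by auto
  ultimately have "a = a' \<and> b = b'"
    by (rule affine_map_eq_two_points)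
  then show ?thesis
    using a'(1) motion' by simp
qed

text \<open>The common motion is read off from the first edge, which makes it an explicit continuous
  function of the deformed net.\<close>

definition top_rotation :: "net_fun \<Rightarrow> net_fun \<Rightarrow> complex" where
  "top_rotation F G = (top_view (G 1 0) - top_view (G 0 0)) / (top_view (F 1 0) - top_view (F 0 0))"

definition top_translation :: "net_fun \<Rightarrow> net_fun \<Rightarrow> complex" where
  "top_translation F G = top_view (G 0 0) - top_rotation F G * top_view (F 0 0)"

lemma top_motion_on_first_edge:
  assumes "top_view (F 0 0) \<noteq> top_view (F 1 0)"
  shows "top_motion_on (top_rotation F G) (top_translation F G) F G {(0, 0), (1, 0)}"
proof -
  have "top_rotation F G * (top_view (F 1 0) - top_view (F 0 0)) = top_view (G 1 0) - top_view (G 0 0)"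
    using assms by (simp add: top_rotation_def)
  then show ?thesis
    by (simp add: top_motion_on_def top_translation_def algebra_simps)
qed

lemma facewise_congruent_top_motion:
  assumes dc: "dual_convex m n F" and cong: "\<forall>i<m. \<forall>j<n. face_congruent F G i j"
  defines "a \<equiv> top_rotation F G" and "b \<equiv> top_translation F G"
  shows "cmod a = 1 \<and> top_motion_on a b F G ({..m} \<times> {..n})"
proof -
  have mn: "2 \<le> m" "2 \<le> n"
    using dc unfolding dual_convex_def by simp_all
  have propagate: "cmod a = 1 \<and> top_motion_on a b F G (face_corners i j)"
    if "i < m" "j < n" "p \<in> face_corners i j" "q \<in> face_corners i j" "p \<noteq> q"
      "top_motion_on a b F G {p, q}" for i j p q
    by (rule face_congruent_top_motion[OF cong[rule_format, OF that(1,2)]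
          dual_convex_inj_on_face_corners[OF dc that(1,2)] that(3-6)])
  have face00: "cmod a = 1 \<and> top_motion_on a b F G (face_corners 0 0)"
    using propagate[of 0 0 "(0, 0)" "(1, 0)"] mn
      top_motion_on_first_edge[of F G, OF dual_convex_top_view_first_edge[OF dc]]
    unfolding a_def b_def by (simp add: face_corners_def)
  have step_j: "top_motion_on a b F G (face_corners i (Suc j))"
    if "top_motion_on a b F G (face_corners i j)" "i < m" "Suc j < n" for i j
    using propagate[of i "Suc j" "(i, Suc j)" "(Suc i, Suc j)"] that(2,3)
      top_motion_on_subset[OF that(1), of "{(i, Suc j), (Suc i, Suc j)}"]
    by (simp add: face_corners_def)
  have step_i: "top_motion_on a b F G (face_corners (Suc i) j)"
    if "top_motion_on a b F G (face_corners i j)" "Suc i < m" "j < n" for i j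
    using propagate[of "Suc i" j "(Suc i, j)" "(Suc i, Suc j)"] that(2,3)
      top_motion_on_subset[OF that(1), of "{(Suc i, j), (Suc i, Suc j)}"]
    by (simp add: face_corners_def)
  have faces: "top_motion_on a b F G (face_corners i j)" if "i < m" "j < n" for i j
    by (rule face_grid_induct[OF that]) (use face00 step_j step_i in blast)+
  have "top_motion_on a b F G {(k, l)}" if "k \<le> m" "l \<le> n" for k l
  proof (rule top_motion_on_subset)
    show "top_motion_on a b F G (face_corners (min k (m - 1)) (min l (n - 1)))"
      using faces mn by simp
    show "{(k, l)} \<subseteq> face_corners (min k (m - 1)) (min l (n - 1))"
      using that mn by (auto simp: face_corners_def min_def)
  qed
  then have "top_motion_on a b F G ({..m} \<times> {..n})"
    unfolding top_motion_on_def by auto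
  then show ?thesis
    using face00 by blast
qed

section \<open>Normalising a deformation\<close>

lemma iso_isometric_deformation_iff:
  "iso_isometric_deformation m n F D \<longleftrightarrow>
     (\<forall>t\<in>{0..1}. is_net m n (D t)) \<and>
     (\<forall>i\<le>m. \<forall>j\<le>n. D 0 i j = F i j) \<and>
     (\<forall>i\<le>m. \<forall>j\<le>n. continuous_on {0..1} (\<lambda>t. D t i j)) \<and>
     (\<forall>t\<in>{0..1}. \<forall>i<m. \<forall>j<n. face_congruent F (D t) i j) \<and>
     (\<forall>t\<in>{0..1}. \<forall>i j. non_boundary m n i j \<longrightarrow> curvature (D t) i j = curvature F i j)"
  unfolding iso_isometric_deformation_def face_congruent_def ..

lemma is_net_iso_congruence:
  "is_iso_congruence K \<Longrightarrow> is_net m n G \<Longrightarrow> is_net m n (\<lambda>i j. K (G i j))"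
  unfolding is_net_def by (blast intro: convex_quad_iso_congruence)

lemma face_congruent_iso_congruence:
  assumes "is_iso_congruence K" "face_congruent F G i j"
  shows "face_congruent F (\<lambda>i j. K (G i j)) i j"
proof -
  obtain C where C: "is_iso_congruence C" "C (F i j) = G i j" "C (F (Suc i) j) = G (Suc i) j"
    "C (F (Suc i) (Suc j)) = G (Suc i) (Suc j)" "C (F i (Suc j)) = G i (Suc j)"
    using assms(2) unfolding face_congruent_def by blast
  show ?thesis
    unfolding face_congruent_def
    by (intro exI[of _ "\<lambda>x. K (C x)"]) (simp add: is_iso_congruence_comp[OF assms(1) C(1)] C(2-5))
qed

lemma iso_isometric_deformation_planar_motion:
  assumes D: "iso_isometric_deformation m n F D"
    and cont: "continuous_on {0..1} a" "continuous_on {0..1} b"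
    and unit: "\<forall>t\<in>{0..1}. cmod (a t) = 1" and start: "a 0 = 1" "b 0 = 0"
  shows "iso_isometric_deformation m n F (\<lambda>t i j. planar_motion (a t) (b t) (D t i j))"
proof -
  have net: "\<forall>t\<in>{0..1}. is_net m n (D t)"
    and init: "\<forall>i\<le>m. \<forall>j\<le>n. D 0 i j = F i j"
    and paths: "\<forall>i\<le>m. \<forall>j\<le>n. continuous_on {0..1} (\<lambda>t. D t i j)"
    and faces: "\<forall>t\<in>{0..1}. \<forall>i<m. \<forall>j<n. face_congruent F (D t) i j"
    and curv: "\<forall>t\<in>{0..1}. \<forall>i j. non_boundary m n i j \<longrightarrow> curvature (D t) i j = curvature F i j"
    using D unfolding iso_isometric_deformation_iff by blast+
  have motion: "is_iso_congruence (planar_motion (a t) (b t))" if "t \<in> {0..1}" for t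
    using unit that by (simp add: is_iso_congruence_planar_motion)
  show ?thesis
    unfolding iso_isometric_deformation_iff
  proof (intro conjI ballI allI impI)
    fix t :: real
    assume "t \<in> {0..1}"
    then show "is_net m n (\<lambda>i j. planar_motion (a t) (b t) (D t i j))"
      using net by (blast intro: is_net_iso_congruence motion)
  next
    fix i j
    assume "i \<le> m" "j \<le> n"
    then show "planar_motion (a 0) (b 0) (D 0 i j) = F i j"
      using init start by simp
  next
    fix i j
    assume "i \<le> m" "j \<le> n"
    then show "continuous_on {0..1} (\<lambda>t. planar_motion (a t) (b t) (D t i j))"
      using paths by (intro continuous_intros cont) auto
  next
    fix t :: real and i j
    assume "t \<in> {0..1}" "i < m" "j < n"
    then show "face_congruent F (\<lambda>i j. planar_motion (a t) (b t) (D t i j)) i j"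
      using faces by (blast intro: face_congruent_iso_congruence motion)
  next
    fix t :: real and i j
    assume "t \<in> {0..1}" "non_boundary m n i j"
    then show "curvature (\<lambda>i j. planar_motion (a t) (b t) (D t i j)) i j = curvature F i j"
      using curv unit by (simp add: curvature_planar_motion)
  qed
qed

lemma trivial_deformation_planar_motion:
  assumes unit: "\<forall>t\<in>{0..1}. cmod (a t) = 1"
    and "trivial_deformation m n F (\<lambda>t i j. planar_motion (a t) (b t) (D t i j))"
  shows "trivial_deformation m n F D"
  unfolding trivial_deformation_def
proof
  fix t :: real
  assume t: "t \<in> {0..1}"
  obtain C where C: "is_iso_congruence C" "\<forall>i\<le>m. \<forall>j\<le>n. planar_motion (a t) (b t) (D t i j) = C (F i j)"
    using assms(2) t unfolding trivial_deformation_def by blast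
  let ?C = "\<lambda>x. planar_motion (cnj (a t)) (- cnj (a t) * b t) (C x)"
  have "is_iso_congruence ?C"
    using unit t by (intro is_iso_congruence_comp[OF is_iso_congruence_planar_motion C(1)]) simp
  moreover have "D t i j = ?C (F i j)" if "i \<le> m" "j \<le> n" for i j
  proof -
    have "?C (F i j) = planar_motion (cnj (a t)) (- cnj (a t) * b t) (planar_motion (a t) (b t) (D t i j))"
      using C(2) that by simp
    also have "\<dots> = D t i j"
      using unit t by (intro planar_motion_inverse) simp
    finally show ?thesis
      by simp
  qed
  ultimately show "\<exists>C. is_iso_congruence C \<and> (\<forall>i\<le>m. \<forall>j\<le>n. D t i j = C (F i j))"
    by blast
qed

lemma v_parallel_planar_motion_inverse:
  assumes "cmod a = 1" "top_motion_on a b F G ({..m} \<times> {..n})"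
  shows "v_parallel m n (\<lambda>i j. planar_motion (cnj a) (- cnj a * b) (G i j)) F"
  unfolding v_parallel_iff_top_view
proof (intro allI impI)
  fix i j
  assume "i \<le> m" "j \<le> n"
  then have "top_view (G i j) = top_view (planar_motion a b (F i j))"
    using assms(2) unfolding top_motion_on_def by auto
  then have "top_view (planar_motion (cnj a) (- cnj a * b) (G i j)) =
      top_view (planar_motion (cnj a) (- cnj a * b) (planar_motion a b (F i j)))"
    by simp
  also have "\<dots> = top_view (F i j)"
    using assms(1) by (simp only: planar_motion_inverse)
  finally show "top_view (planar_motion (cnj a) (- cnj a * b) (G i j)) = top_view (F i j)" .
qed

lemma deformation_normalizing_motion:
  assumes dc: "dual_convex m n F" and D: "iso_isometric_deformation m n F D"
  obtains a b where "continuous_on {0..1} a" "continuous_on {0..1} b"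
    "\<forall>t\<in>{0..1}. cmod (a t) = 1" "a 0 = 1" "b 0 = 0"
    "\<forall>t\<in>{0..1}. v_parallel m n (\<lambda>i j. planar_motion (a t) (b t) (D t i j)) F"
proof -
  define r where "r t = top_rotation F (D t)" for t
  define s where "s t = top_translation F (D t)" for t
  have mn: "0 < m" "0 < n"
    using dc unfolding dual_convex_def by simp_all
  have init: "\<forall>i\<le>m. \<forall>j\<le>n. D 0 i j = F i j"
    and paths: "\<forall>i\<le>m. \<forall>j\<le>n. continuous_on {0..1} (\<lambda>t. D t i j)"
    and faces: "\<forall>t\<in>{0..1}. \<forall>i<m. \<forall>j<n. face_congruent F (D t) i j"
    using D unfolding iso_isometric_deformation_iff by blast+
  have motion: "cmod (r t) = 1 \<and> top_motion_on (r t) (s t) F (D t) ({..m} \<times> {..n})"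
    if "t \<in> {0..1}" for t
    unfolding r_def s_def using facewise_congruent_top_motion[OF dc] faces that by blast
  have edge: "top_view (F 1 0) - top_view (F 0 0) \<noteq> 0"
    using dual_convex_top_view_first_edge[OF dc] by simp
  have "continuous_on {0..1} r"
    unfolding r_def top_rotation_def using paths mn edge by (intro continuous_intros) auto
  moreover have "continuous_on {0..1} s"
    unfolding s_def top_translation_def top_rotation_def using paths mn edge
    by (intro continuous_intros) auto
  moreover have "r 0 = 1" "s 0 = 0"
    using init mn edge by (simp_all add: r_def s_def top_rotation_def top_translation_def)
  ultimately show thesis
    using that[of "\<lambda>t. cnj (r t)" "\<lambda>t. - cnj (r t) * s t"] motion
      v_parallel_planar_motion_inverse[of "r _" "s _"]
    by (simp add: continuous_on_cnj continuous_on_mult continuous_on_minus)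
qed

theorem lemma9:
  fixes m n :: nat and F :: "nat \<Rightarrow> nat \<Rightarrow> real^3"
  assumes "dual_convex m n F"
  shows "flexible_I3 m n F \<longleftrightarrow>
         (\<exists>D. iso_isometric_deformation m n F D \<and> \<not> trivial_deformation m n F D \<and>
              (\<forall>t\<in>{0..1}. v_parallel m n (D t) F))"
proof
  assume "\<exists>D. iso_isometric_deformation m n F D \<and> \<not> trivial_deformation m n F D \<and>
              (\<forall>t\<in>{0..1}. v_parallel m n (D t) F)"
  then show "flexible_I3 m n F"
    unfolding flexible_I3_def by blast
next
  assume "flexible_I3 m n F"
  then obtain D where D: "iso_isometric_deformation m n F D" and nontrivial: "\<not> trivial_deformation m n F D"
    unfolding flexible_I3_def by blast
  obtain a b where motion: "continuous_on {0..1} a" "continuous_on {0..1} b"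
      "\<forall>t\<in>{0..1}. cmod (a t) = 1" "a 0 = 1" "b 0 = 0"
    and parallel: "\<forall>t\<in>{0..1}. v_parallel m n (\<lambda>i j. planar_motion (a t) (b t) (D t i j)) F"
    using deformation_normalizing_motion[OF assms D] by blast
  let ?G = "\<lambda>t i j. planar_motion (a t) (b t) (D t i j)"
  have "iso_isometric_deformation m n F ?G"
    using iso_isometric_deformation_planar_motion[OF D motion] .
  moreover have "\<not> trivial_deformation m n F ?G"
    using trivial_deformation_planar_motion[OF motion(3)] nontrivial by blast
  ultimately show "\<exists>D. iso_isometric_deformation m n F D \<and> \<not> trivial_deformation m n F D \<and>
              (\<forall>t\<in>{0..1}. v_parallel m n (D t) F)"
    using parallel by blast
qed

end
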